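(* In $\mathbb{C}^3$ let $|l_a\rangle=(\sin\theta\cos\varphi_a,\sin\theta\sin\varphi_a,\cos\theta)$ for $a=1,\dots,5$, with $\varphi_a=4\pi a/5$ and $\cos\theta=5^{-1/4}$, so that $\langle l_a|l_{a\oplus1}\rangle=0$ (indices mod 5). Then the planes $\mathrm{span}\{|l_2\rangle,|l_3\rangle\}$ and $\mathrm{span}\{|l_4\rangle,|l_5\rangle\}$ intersect in a ray; let $|\psi_2\rangle$ be a unit vector on it, let $|\chi\rangle$ be a unit vector orthogonal to $|l_2\rangle,|l_3\rangle$ and $|\chi'\rangle$ a unit vector orthogonal to $|l_4\rangle,|l_5\rangle$. Then $|\langle l_1|\psi_2\rangle|^2=1-\frac{2}{\sqrt5}>0$, while every function $v$ from the set of rays $\{|l_1\rangle,\dots,|l_5\rangle,|\chi\rangle,|\chi'\rangle,|\psi_2\rangle\}$ to $\{0,1\}$ which assigns value 1 to exactly one member of every orthogonal triple in this set, assigns value 1 to at most one member of every orthogonal pair in this set, and satisfies $v(|\psi_2\rangle)=1$, must satisfy $v(|l_1\rangle)=0$. *)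

theory Defs
  imports "HOL-Analysis.Analysis"
begin

definition mk3 :: "complex \<Rightarrow> complex \<Rightarrow> complex \<Rightarrow> complex ^ 3" where
  "mk3 x y z = (\<chi> i. if i = 1 then x else if i = 2 then y else z)"

text \<open>Hermitian inner product, antilinear in the first argument: bra-ket u v.\<close>
definition herm :: "complex ^ 3 \<Rightarrow> complex ^ 3 \<Rightarrow> complex" where
  "herm u v = (\<Sum>i\<in>UNIV. cnj (u $ i) * v $ i)"

definition cspan2 :: "complex ^ 3 \<Rightarrow> complex ^ 3 \<Rightarrow> (complex ^ 3) set" where
  "cspan2 u w = {a *s u + b *s w | a b. True}"

definition ray :: "complex ^ 3 \<Rightarrow> (complex ^ 3) set" where
  "ray u = {c *s u | c. True}"

definition orth_ray :: "(complex ^ 3) set \<Rightarrow> (complex ^ 3) set \<Rightarrow> bool" where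
  "orth_ray R Q \<longleftrightarrow> (\<forall>x\<in>R. \<forall>y\<in>Q. herm x y = 0)"

definition cth :: real where "cth = 5 powr (-1/4)"
definition sth :: real where "sth = sqrt (1 - cth\<^sup>2)"
definition phi :: "nat \<Rightarrow> real" where "phi a = 4 * pi * real a / 5"

definition l :: "nat \<Rightarrow> complex ^ 3" where
  "l a = mk3 (complex_of_real (sth * cos (phi a)))
             (complex_of_real (sth * sin (phi a)))
             (complex_of_real cth)"

definition admissible :: "(complex ^ 3) set set \<Rightarrow> ((complex ^ 3) set \<Rightarrow> nat) \<Rightarrow> bool" where
  "admissible S v \<longleftrightarrow>
     (\<forall>R\<in>S. v R \<in> {0, 1}) \<and>
     (\<forall>R1\<in>S. \<forall>R2\<in>S. \<forall>R3\<in>S.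
        R1 \<noteq> R2 \<and> R1 \<noteq> R3 \<and> R2 \<noteq> R3 \<and>
        orth_ray R1 R2 \<and> orth_ray R1 R3 \<and> orth_ray R2 R3 \<longrightarrow>
        v R1 + v R2 + v R3 = 1) \<and>
     (\<forall>R1\<in>S. \<forall>R2\<in>S. R1 \<noteq> R2 \<and> orth_ray R1 R2 \<longrightarrow> v R1 + v R2 \<le> 1)"

end

theory Submission
  imports Defs
begin

text \<open>The vectors l1, \<dots>, l5 have unit length, neighbours (mod 5) are orthogonal and all other
  inner products equal \<open>\<tau> = (\<surd>5 - 1)/2\<close>, which satisfies \<open>\<tau>\<^sup>2 = 1 - \<tau>\<close>. Hence
  \<open>l2 + \<tau> l3 = \<tau> l4 + l5\<close> spans the intersection of the two planes, and for a unit vector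
  \<open>\<psi>\<close> on it \<open>|\<langle>l1|\<psi>\<rangle>|\<^sup>2 = \<tau>\<^sup>4/(1 + \<tau>\<^sup>2) = 1 - 2/\<surd>5\<close>.
  For the valuation: \<open>\<psi>\<close> is orthogonal to \<open>\<chi>\<close> and \<open>\<chi>'\<close>, so \<open>v \<chi> = v \<chi>' = 0\<close>, and the
  triples \<open>{l2, l3, \<chi>}\<close>, \<open>{l4, l5, \<chi>'}\<close> put exactly one 1 on each of \<open>{l2, l3}\<close> and
  \<open>{l4, l5}\<close>. If \<open>v l1 = 1\<close>, its neighbours \<open>l2, l5\<close> get 0, so both \<open>l3\<close> and \<open>l4\<close>
  get 1, although they are orthogonal.\<close>

lemma cos_pi_div_5: "cos (pi / 5) = (1 + sqrt 5) / 4"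
proof -
  define c where "c = cos (pi / 5)"
  have c_pos: "c > 0"
    unfolding c_def using pi_gt_zero by (intro cos_gt_zero_pi) linarith+
  have "4 * c ^ 3 - 3 * c = - (2 * c\<^sup>2 - 1)"
    using cos_treble_cos[of "pi / 5"] cos_double_cos[of "pi / 5"] cos_pi_minus[of "2 * (pi / 5)"]
    unfolding c_def by (simp add: field_simps)
  then have "(c + 1) * (4 * c\<^sup>2 - 2 * c - 1) = 0"
    by (simp add: algebra_simps power2_eq_square power3_eq_cube)
  then have "4 * c\<^sup>2 - 2 * c - 1 = 0"
    using c_pos by simp
  moreover have "(c - (1 + sqrt 5) / 4) * (c - (1 - sqrt 5) / 4) = (4 * c\<^sup>2 - 2 * c - 1) / 4"
    by (simp add: algebra_simps power2_eq_square add_divide_distrib diff_divide_distrib)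
  ultimately have "c = (1 + sqrt 5) / 4 \<or> c = (1 - sqrt 5) / 4"
    by simp
  moreover have "1 < sqrt 5"
    by simp
  ultimately show ?thesis
    using c_pos unfolding c_def by fastforce
qed

lemma cos_2pi_div_5: "cos (2 * pi / 5) = (sqrt 5 - 1) / 4"
  using cos_double_cos[of "pi / 5"]
  by (simp add: cos_pi_div_5 power2_eq_square algebra_simps)

lemma cos_4pi_div_5_multiples:
  "cos (4 * pi * 1 / 5) = - (1 + sqrt 5) / 4"
  "cos (4 * pi * 2 / 5) = (sqrt 5 - 1) / 4"
  "cos (4 * pi * 3 / 5) = (sqrt 5 - 1) / 4"
  "cos (4 * pi * 4 / 5) = - (1 + sqrt 5) / 4"
  using cos_pi_minus[of "pi / 5"] cos_periodic[of "- (2 * pi / 5)"] cos_periodic[of "2 * pi / 5"]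
    cos_periodic[of "pi + pi / 5"] cos_periodic_pi2[of "pi / 5"] cos_pi_div_5 cos_2pi_div_5
  by (simp_all add: field_simps)

lemma cth_squared: "cth\<^sup>2 = 1 / sqrt 5"
proof -
  have "cth\<^sup>2 = 5 powr (- 1 / 4 + - 1 / 4)"
    unfolding cth_def power2_eq_square by (rule powr_add[symmetric])
  also have "(- 1 / 4 + - 1 / 4 :: real) = - (1 / 2)"
    by simp
  also have "(5 :: real) powr - (1 / 2) = inverse (sqrt 5)"
    by (simp add: powr_minus powr_half_sqrt)
  finally show ?thesis
    by (simp add: divide_inverse)
qed

lemma sth_squared: "sth\<^sup>2 = 1 - 1 / sqrt 5"
  by (simp add: sth_def cth_squared)

definition tau :: real where "tau = (sqrt 5 - 1) / 2"

lemma tau_pos: "tau > 0"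
  by (simp add: tau_def)

lemma tau_squared: "tau\<^sup>2 = 1 - tau"
  by (simp add: tau_def power2_eq_square field_simps)

lemma tau_fourth_power_ratio: "tau ^ 4 / (1 + tau\<^sup>2) = 1 - 2 / sqrt 5"
proof -
  have "tau ^ 4 = (1 - tau)\<^sup>2" and "1 + tau\<^sup>2 = 2 - tau"
    using tau_squared by (simp_all add: power4_eq_xxxx power2_eq_square mult.assoc[symmetric])
  moreover have "(1 - tau)\<^sup>2 = (1 - 2 / sqrt 5) * (2 - tau)"
    by (simp add: tau_def power2_eq_square field_simps)
  moreover have "2 - tau \<noteq> 0"
    using tau_squared tau_pos by (smt (verit) zero_less_power)
  ultimately show ?thesis
    by simp
qed

lemma herm_l_l: "herm (l i) (l j) = of_real (sth\<^sup>2 * cos (4 * pi * \<bar>real j - real i\<bar> / 5) + cth\<^sup>2)"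
proof -
  have "herm (l i) (l j) = of_real (sth\<^sup>2 * cos (phi j - phi i) + cth\<^sup>2)"
    by (simp add: herm_def sum_3 l_def mk3_def cos_diff power2_eq_square algebra_simps)
  moreover have "phi j - phi i = 4 * pi * (real j - real i) / 5"
    by (simp add: phi_def field_simps)
  moreover have "\<bar>4 * pi * (real j - real i) / 5\<bar> = 4 * pi * \<bar>real j - real i\<bar> / 5"
    by (simp add: abs_mult)
  ultimately show ?thesis
    by (metis cos_abs_real)
qed

lemma herm_l_orthogonal:
  assumes "\<bar>real j - real i\<bar> \<in> {1, 4}"
  shows "herm (l i) (l j) = 0"
proof -
  have cos_value: "cos (4 * pi * \<bar>real j - real i\<bar> / 5) = - (1 + sqrt 5) / 4"
    using assms cos_4pi_div_5_multiples by auto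
  have "sth\<^sup>2 * (- (1 + sqrt 5) / 4) + cth\<^sup>2 = 0"
    by (simp add: sth_squared cth_squared field_simps)
  then show ?thesis
    by (simp only: herm_l_l cos_value of_real_0)
qed

lemma herm_l_tau:
  assumes "\<bar>real j - real i\<bar> \<in> {2, 3}"
  shows "herm (l i) (l j) = of_real tau"
proof -
  have cos_value: "cos (4 * pi * \<bar>real j - real i\<bar> / 5) = (sqrt 5 - 1) / 4"
    using assms cos_4pi_div_5_multiples by auto
  have "sth\<^sup>2 * ((sqrt 5 - 1) / 4) + cth\<^sup>2 = tau"
    by (simp add: sth_squared cth_squared tau_def field_simps)
  then show ?thesis
    by (simp only: herm_l_l cos_value)
qed

lemma herm_l_self: "herm (l i) (l i) = 1"
  by (simp add: herm_l_l sth_squared cth_squared)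

lemma herm_add_left: "herm (u + v) w = herm u w + herm v w"
  by (simp add: herm_def algebra_simps sum.distrib)

lemma herm_add_right: "herm u (v + w) = herm u v + herm u w"
  by (simp add: herm_def algebra_simps sum.distrib)

lemma herm_diff_left: "herm (u - v) w = herm u w - herm v w"
  by (simp add: herm_def algebra_simps sum_subtractf)

lemma herm_diff_right: "herm u (v - w) = herm u v - herm u w"
  by (simp add: herm_def algebra_simps sum_subtractf)

lemma herm_scale_left: "herm (c *s u) v = cnj c * herm u v"
  by (simp add: herm_def algebra_simps sum_distrib_left)

lemma herm_scale_right: "herm u (c *s v) = c * herm u v"
  by (simp add: herm_def algebra_simps sum_distrib_left)

lemmas herm_linear = herm_add_left herm_add_right herm_diff_left herm_diff_right
  herm_scale_left herm_scale_right

lemma herm_self_eq_sum: "herm u u = of_real (\<Sum>i\<in>UNIV. (cmod (u $ i))\<^sup>2)"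
  unfolding herm_def of_real_sum by (intro sum.cong refl) (metis complex_norm_square mult.commute)

lemma herm_self_eq_0_iff: "herm u u = 0 \<longleftrightarrow> u = 0"
proof
  assume "herm u u = 0"
  then have "(\<Sum>i\<in>UNIV. (cmod (u $ i))\<^sup>2) = 0"
    by (simp only: herm_self_eq_sum of_real_eq_0_iff)
  then show "u = 0"
    by (simp add: sum_nonneg_eq_0_iff vec_eq_iff)
qed (simp add: herm_def)

lemma l_nonzero: "l i \<noteq> 0"
  by (metis herm_l_self herm_self_eq_0_iff zero_neq_one)

lemma herm_orthogonal_cspan2:
  assumes "herm a x = 0" "herm b x = 0" "y \<in> cspan2 a b"
  shows "herm y x = 0"
  using assms by (auto simp: cspan2_def herm_linear)

lemma orth_ray_ray: "herm u v = 0 \<Longrightarrow> orth_ray (ray u) (ray v)"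
  unfolding orth_ray_def ray_def by (auto simp: herm_linear)

lemma ray_neq_if_orthogonal:
  assumes "herm u v = 0" "u \<noteq> 0"
  shows "ray u \<noteq> ray v"
proof
  assume "ray u = ray v"
  moreover have "u \<in> ray u"
    unfolding ray_def by (rule CollectI, rule exI[of _ 1]) simp
  ultimately obtain c where "u = c *s v"
    unfolding ray_def by blast
  then have "herm u u = 0"
    using assms(1) by (simp add: herm_scale_right)
  then show False
    using assms(2) herm_self_eq_0_iff by blast
qed

lemma transition_probability_ray:
  assumes "\<psi> \<in> ray w" "herm \<psi> \<psi> = 1" "herm w w = of_real r"
  shows "(cmod (herm u \<psi>))\<^sup>2 = (cmod (herm u w))\<^sup>2 / r"
proof -
  obtain e where e: "\<psi> = e *s w"
    using assms(1) unfolding ray_def by blast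
  have "herm \<psi> \<psi> = cnj e * e * of_real r"
    unfolding e by (simp add: herm_linear assms(3) mult.assoc)
  also have "cnj e * e = of_real ((cmod e)\<^sup>2)"
    by (metis complex_norm_square mult.commute of_real_power)
  finally have "of_real ((cmod e)\<^sup>2 * r) = herm \<psi> \<psi>"
    by simp
  then have "(cmod e)\<^sup>2 * r = 1"
    using assms(2) by (metis of_real_eq_1_iff)
  then have "(cmod e)\<^sup>2 = 1 / r"
    by (metis mult.commute mult_zero_left nonzero_eq_divide_eq zero_neq_one)
  moreover have "(cmod (herm u \<psi>))\<^sup>2 = (cmod e)\<^sup>2 * (cmod (herm u w))\<^sup>2"
    unfolding e by (simp add: herm_scale_right norm_mult power_mult_distrib)
  ultimately show ?thesis
    by simp
qed

definition plane_meet :: "complex ^ 3" where "plane_meet = l 2 + of_real tau *s l 3"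

lemma plane_meet_alt: "plane_meet = of_real tau *s l 4 + l 5"
proof -
  have "herm (plane_meet - (of_real tau *s l 4 + l 5)) (plane_meet - (of_real tau *s l 4 + l 5)) =
    2 * (1 - of_real tau - of_real (tau\<^sup>2))"
    by (simp add: plane_meet_def herm_linear herm_l_orthogonal herm_l_tau herm_l_self
        algebra_simps power2_eq_square)
  also have "\<dots> = 0"
    by (simp add: tau_squared)
  finally show ?thesis
    by (simp add: herm_self_eq_0_iff)
qed

lemma herm_plane_meet_plane_meet: "herm plane_meet plane_meet = of_real (1 + tau\<^sup>2)"
  by (simp add: plane_meet_def herm_linear herm_l_orthogonal herm_l_tau herm_l_self power2_eq_square)

lemma plane_meet_nonzero: "plane_meet \<noteq> 0"
proof
  assume "plane_meet = 0"
  then have "of_real (1 + tau\<^sup>2) = (0 :: complex)"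
    by (simp only: herm_plane_meet_plane_meet[symmetric] herm_self_eq_0_iff)
  then show False
    by (smt (verit) of_real_eq_0_iff zero_le_power2)
qed

lemma herm_l1_plane_meet: "herm (l 1) plane_meet = of_real (tau\<^sup>2)"
  by (simp add: plane_meet_def herm_linear herm_l_orthogonal herm_l_tau power2_eq_square)

lemma cspan2_inter_eq_ray_plane_meet: "cspan2 (l 2) (l 3) \<inter> cspan2 (l 4) (l 5) = ray plane_meet"
proof (intro equalityI subsetI)
  fix x
  assume "x \<in> cspan2 (l 2) (l 3) \<inter> cspan2 (l 4) (l 5)"
  then obtain a b c d where x23: "x = a *s l 2 + b *s l 3" and x45: "x = c *s l 4 + d *s l 5"
    unfolding cspan2_def by blast
  let ?t = "complex_of_real tau"
  have "herm (l k) (a *s l 2 + b *s l 3) = herm (l k) (c *s l 4 + d *s l 5)" for k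
    using x23 x45 by simp
  note coefficients = this[of 2] this[of 3] this[of 4]
  have "a = c * ?t + d * ?t" "b = d * ?t" "a * ?t = c"
    using coefficients by (simp_all (no_asm_use) add: herm_linear herm_l_orthogonal herm_l_tau herm_l_self)
  moreover have "?t * ?t = 1 - ?t" "?t \<noteq> 0"
    using tau_squared tau_pos by (simp_all add: power2_eq_square flip: of_real_mult)
  ultimately have "a = d" "b = a * ?t"
    by algebra+
  then have "x = a *s plane_meet"
    unfolding x23 plane_meet_def by (simp add: vec_eq_iff algebra_simps)
  then show "x \<in> ray plane_meet"
    unfolding ray_def by blast
next
  fix x
  assume "x \<in> ray plane_meet"
  then obtain e where x: "x = e *s plane_meet"
    unfolding ray_def by blast
  have "x = e *s l 2 + (e * of_real tau) *s l 3"
    unfolding x plane_meet_def by (simp add: vec_eq_iff algebra_simps)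
  moreover have "x = (e * of_real tau) *s l 4 + e *s l 5"
    unfolding x plane_meet_alt by (simp add: vec_eq_iff algebra_simps)
  ultimately show "x \<in> cspan2 (l 2) (l 3) \<inter> cspan2 (l 4) (l 5)"
    unfolding cspan2_def by blast
qed

lemma transition_probability_l1_plane_meet:
  assumes "\<psi> \<in> cspan2 (l 2) (l 3) \<inter> cspan2 (l 4) (l 5)" "herm \<psi> \<psi> = 1"
  shows "(cmod (herm (l 1) \<psi>))\<^sup>2 = 1 - 2 / sqrt 5"
proof -
  have "(cmod (herm (l 1) \<psi>))\<^sup>2 = (cmod (herm (l 1) plane_meet))\<^sup>2 / (1 + tau\<^sup>2)"
    using assms cspan2_inter_eq_ray_plane_meet herm_plane_meet_plane_meet
    by (intro transition_probability_ray) simp_all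
  also have "\<dots> = tau ^ 4 / (1 + tau\<^sup>2)"
    unfolding herm_l1_plane_meet norm_of_real by (simp flip: power_mult)
  finally show ?thesis
    by (simp only: tau_fourth_power_ratio)
qed

lemma admissible_orthogonal_pair:
  assumes "admissible S v" "ray x \<in> S" "ray y \<in> S" "herm x y = 0" "x \<noteq> 0"
  shows "v (ray x) + v (ray y) \<le> 1"
proof -
  have "\<forall>R1\<in>S. \<forall>R2\<in>S. R1 \<noteq> R2 \<and> orth_ray R1 R2 \<longrightarrow> v R1 + v R2 \<le> 1"
    using assms(1) unfolding admissible_def by (rule conjunct2[OF conjunct2])
  from this[rule_format, OF assms(2,3)] show ?thesis
    using ray_neq_if_orthogonal[OF assms(4,5)] orth_ray_ray[OF assms(4)] by blast
qed

lemma admissible_orthogonal_triple: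
  assumes "admissible S v" "ray x \<in> S" "ray y \<in> S" "ray z \<in> S"
    and "herm x y = 0" "herm x z = 0" "herm y z = 0" "x \<noteq> 0" "y \<noteq> 0"
  shows "v (ray x) + v (ray y) + v (ray z) = 1"
proof -
  have "\<forall>R1\<in>S. \<forall>R2\<in>S. \<forall>R3\<in>S. R1 \<noteq> R2 \<and> R1 \<noteq> R3 \<and> R2 \<noteq> R3 \<and>
      orth_ray R1 R2 \<and> orth_ray R1 R3 \<and> orth_ray R2 R3 \<longrightarrow> v R1 + v R2 + v R3 = 1"
    using assms(1) unfolding admissible_def by (rule conjunct1[OF conjunct2])
  from this[rule_format, OF assms(2-4)] show ?thesis
    using ray_neq_if_orthogonal[OF assms(5,8)] ray_neq_if_orthogonal[OF assms(6,8)]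
      ray_neq_if_orthogonal[OF assms(7,9)] orth_ray_ray[OF assms(5)] orth_ray_ray[OF assms(6)]
      orth_ray_ray[OF assms(7)]
    by blast
qed

lemma admissible_pentagon_forces_zero:
  assumes adm: "admissible S v"
    and in_S: "ray a1 \<in> S" "ray a2 \<in> S" "ray a3 \<in> S" "ray a4 \<in> S" "ray a5 \<in> S"
      "ray x \<in> S" "ray x' \<in> S" "ray p \<in> S"
    and nonzero: "a1 \<noteq> 0" "a2 \<noteq> 0" "a3 \<noteq> 0" "a4 \<noteq> 0" "a5 \<noteq> 0" "p \<noteq> 0"
    and pentagon: "herm a1 a2 = 0" "herm a2 a3 = 0" "herm a3 a4 = 0" "herm a4 a5 = 0"
      "herm a5 a1 = 0"
    and x: "herm a2 x = 0" "herm a3 x = 0" "herm p x = 0"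
    and x': "herm a4 x' = 0" "herm a5 x' = 0" "herm p x' = 0"
    and p_true: "v (ray p) = 1"
  shows "v (ray a1) = 0"
proof -
  note pair = admissible_orthogonal_pair[OF adm] and triple = admissible_orthogonal_triple[OF adm]
  have "v (ray x) = 0"
    using pair[OF in_S(8,6) x(3) nonzero(6)] p_true by simp
  with triple[OF in_S(2,3,6) pentagon(2) x(1,2) nonzero(2,3)]
  have a2_a3: "v (ray a2) + v (ray a3) = 1"
    by simp
  have "v (ray x') = 0"
    using pair[OF in_S(8,7) x'(3) nonzero(6)] p_true by simp
  with triple[OF in_S(4,5,7) pentagon(4) x'(1,2) nonzero(4,5)]
  have a4_a5: "v (ray a4) + v (ray a5) = 1"
    by simp
  have "v (ray a1) \<in> {0, 1}"
    using conjunct1[OF adm[unfolded admissible_def]] in_S(1) by blast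
  then show ?thesis
    using a2_a3 a4_a5 pair[OF in_S(1,2) pentagon(1) nonzero(1)]
      pair[OF in_S(3,4) pentagon(3) nonzero(3)] pair[OF in_S(5,1) pentagon(5) nonzero(5)]
    by auto
qed

theorem mainTheorem6:
  shows "(\<forall>a\<in>{1..5::nat}. herm (l a) (l (a mod 5 + 1)) = 0) \<and>
    (\<exists>w. w \<noteq> 0 \<and> cspan2 (l 2) (l 3) \<inter> cspan2 (l 4) (l 5) = ray w) \<and>
    (\<forall>\<psi> chi chi'.
       \<psi> \<in> cspan2 (l 2) (l 3) \<inter> cspan2 (l 4) (l 5) \<and> herm \<psi> \<psi> = 1 \<and>
       herm (l 2) chi = 0 \<and> herm (l 3) chi = 0 \<and> herm chi chi = 1 \<and>
       herm (l 4) chi' = 0 \<and> herm (l 5) chi' = 0 \<and> herm chi' chi' = 1 \<longrightarrow>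
       (cmod (herm (l 1) \<psi>))\<^sup>2 = 1 - 2 / sqrt 5 \<and> 1 - 2 / sqrt 5 > 0 \<and>
       (\<forall>v. admissible (ray ` {l 1, l 2, l 3, l 4, l 5, chi, chi', \<psi>}) v \<and>
            v (ray \<psi>) = 1 \<longrightarrow> v (ray (l 1)) = 0))"
proof (intro conjI allI impI ballI)
  fix a :: nat
  assume "a \<in> {1..5}"
  then have "a \<in> {1, 2, 3, 4, 5}"
    by auto
  then show "herm (l a) (l (a mod 5 + 1)) = 0"
    by (auto simp: herm_l_orthogonal)
next
  show "\<exists>w. w \<noteq> 0 \<and> cspan2 (l 2) (l 3) \<inter> cspan2 (l 4) (l 5) = ray w"
    using plane_meet_nonzero cspan2_inter_eq_ray_plane_meet by blast
next
  fix \<psi> chi chi' v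
  assume hyps: "\<psi> \<in> cspan2 (l 2) (l 3) \<inter> cspan2 (l 4) (l 5) \<and> herm \<psi> \<psi> = 1 \<and>
    herm (l 2) chi = 0 \<and> herm (l 3) chi = 0 \<and> herm chi chi = 1 \<and>
    herm (l 4) chi' = 0 \<and> herm (l 5) chi' = 0 \<and> herm chi' chi' = 1"
  then show "(cmod (herm (l 1) \<psi>))\<^sup>2 = 1 - 2 / sqrt 5"
    using transition_probability_l1_plane_meet by blast
  show "1 - 2 / sqrt 5 > 0"
    by (simp add: real_less_rsqrt)
  assume "admissible (ray ` {l 1, l 2, l 3, l 4, l 5, chi, chi', \<psi>}) v \<and> v (ray \<psi>) = 1"
  moreover have "\<psi> \<noteq> 0"
    using hyps by (metis herm_self_eq_0_iff zero_neq_one)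
  moreover have "herm \<psi> chi = 0" "herm \<psi> chi' = 0"
    using hyps herm_orthogonal_cspan2[of "l 2" chi "l 3" \<psi>]
      herm_orthogonal_cspan2[of "l 4" chi' "l 5" \<psi>] by simp_all
  ultimately show "v (ray (l 1)) = 0"
    using hyps l_nonzero
    by (intro admissible_pentagon_forces_zero[of "ray ` {l 1, l 2, l 3, l 4, l 5, chi, chi', \<psi>}"
          v "l 1" "l 2" "l 3" "l 4" "l 5" chi chi' \<psi>])
      (simp_all add: herm_l_orthogonal)
qed

end
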